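(* Let $p$ be any probability distribution on $\mathbb{N}$, let $\delta>0$ and let $k\ge2$ be an integer. Let $X_1^n$ be generated i.i.d. with marginal $p$ and let $q=q(X^n)$ be the empirical distribution of $X_1^n$. Then \[p\Big(|q(X^n)-p|_1>\delta\ \text{ and }\ 2F_q^{-1}(1-\delta/6)\le k\Big)\le(2^k-2)\exp\Big(-\frac{n\delta^2}{18}\Big).\]
   Context: $|\cdot|_1$ is the $\ell_1$ distance. For a distribution $r$ on $\mathbb{N}$, the (non-standard) cumulative distribution function $F_r:\mathbb{R}^+\cup\{\infty\}\to[0,1]$ is defined as the usual CDF $F_r(y)=r(\{0,\ldots,y\})$ at support points $y$ of $r$, by linear interpolation between consecutive support points, and $F_r(\infty)=1$; $F_r^{-1}:[0,1]\to\mathbb{R}^+\cup\{\infty\}$ is its inverse, with $F_r^{-1}(x)=0$ for $0\le x<F_r(0)$, $F_r^{-1}(1)=\infty$ if $r$ has infinite support, and otherwise $F_r^{-1}(1)$ the smallest natural number $y$ with $F_r(y)=1$. *)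

theory Defs
  imports "HOL-Probability.Probability"
begin

definition cdf_nodes :: "(nat \<Rightarrow> real) \<Rightarrow> nat set" where
  "cdf_nodes r = insert 0 {y. r y > 0}"

definition cdf_nat :: "(nat \<Rightarrow> real) \<Rightarrow> nat \<Rightarrow> real" where
  "cdf_nat r y = (\<Sum>i\<le>y. r i)"

text \<open>The non-standard CDF F_r on [0,oo): usual CDF at nodes, linear interpolation
  between consecutive nodes, and constant (= 1 for a distribution) after the last node
  when the support is finite.\<close>
definition Fcdf :: "(nat \<Rightarrow> real) \<Rightarrow> real \<Rightarrow> real" where
  "Fcdf r y =
     (let a = Max {n \<in> cdf_nodes r. real n \<le> y} in
      if \<exists>b \<in> cdf_nodes r. real b > y then
        (let b = (LEAST b. b \<in> cdf_nodes r \<and> real b > y) in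
          cdf_nat r a + (y - real a) / (real b - real a) * (cdf_nat r b - cdf_nat r a))
      else cdf_nat r a)"

definition Finv :: "(nat \<Rightarrow> real) \<Rightarrow> real \<Rightarrow> ereal" where
  "Finv r x =
     (if x < Fcdf r 0 then 0
      else if x = 1 then
        (if infinite {y. r y > 0} then \<infinity>
         else ereal (real (LEAST y::nat. Fcdf r (real y) = 1)))
      else ereal (THE y. y \<ge> 0 \<and> Fcdf r y = x))"

definition empirical :: "nat \<Rightarrow> (nat \<Rightarrow> nat) \<Rightarrow> nat \<Rightarrow> real" where
  "empirical n X x = real (card {i \<in> {..<n}. X i = x}) / real n"

definition l1_dist :: "(nat \<Rightarrow> real) \<Rightarrow> nat pmf \<Rightarrow> real" where
  "l1_dist q p = (\<Sum>x. \<bar>q x - pmf p x\<bar>)"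

end

theory Submission
  imports Defs
begin

text \<open>
  On the event in question the empirical distribution q puts mass at least 1 - \<delta>/3 on
  S = {0, ..., k - 1}: as F_q interpolates linearly between consecutive support points, the
  point y = F_q^-1(1 - \<delta>/6) \<le> k/2 satisfies 1 - F_q(k - 1) \<le> 2 (1 - F_q(y)) = \<delta>/3.
  If p(S) \<le> 1 - \<delta>/2, then q(S) \<ge> p(S) + \<delta>/6 directly. Otherwise both q and p have
  little mass outside S, so the l1 distance exceeding \<delta> forces q - p to have a positive
  part of mass at least \<delta>/6 on a proper nonempty subset of S. Hoeffding's inequality
  for each of these at most 2^k - 2 sets and a union bound give the claim.
\<close>

lemma mem_cdf_nodes: "j \<in> cdf_nodes r \<longleftrightarrow> j = 0 \<or> r j > 0"
  unfolding cdf_nodes_def by auto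

locale finite_nat_distribution =
  fixes r :: "nat \<Rightarrow> real" and L :: nat
  assumes nonneg: "r j \<ge> 0"
    and vanishes_above: "L < j \<Longrightarrow> r j = 0"
    and cdf_nat_bound: "cdf_nat r L = 1"
begin

lemma cdf_nat_mono: "m \<le> m' \<Longrightarrow> cdf_nat r m \<le> cdf_nat r m'"
  unfolding cdf_nat_def by (rule sum_mono2) (auto simp: nonneg)

lemma cdf_nat_eq_of_gap:
  assumes "a \<le> m" "\<And>i. a < i \<Longrightarrow> i \<le> m \<Longrightarrow> r i = 0"
  shows "cdf_nat r m = cdf_nat r a"
proof -
  have "{..m} = {..a} \<union> {a<..m}" using assms(1) by auto
  then have "cdf_nat r m = cdf_nat r a + (\<Sum>i\<in>{a<..m}. r i)"
    unfolding cdf_nat_def by (simp add: sum.union_disjoint ivl_disj_int)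
  also have "(\<Sum>i\<in>{a<..m}. r i) = 0" using assms(2) by (intro sum.neutral) auto
  finally show ?thesis by simp
qed

lemma cdf_nat_Suc: "cdf_nat r (Suc m) = cdf_nat r m + r (Suc m)"
  by (simp add: cdf_nat_def)

lemma cdf_nat_eq_1: "L \<le> m \<Longrightarrow> cdf_nat r m = 1"
  using cdf_nat_eq_of_gap[of L m] vanishes_above cdf_nat_bound by auto

lemma cdf_nat_le_1: "cdf_nat r m \<le> 1"
  using cdf_nat_mono[of m "max m L"] cdf_nat_eq_1[of "max m L"] by auto

lemma cdf_nat_eq_1_of_vanishing: "(\<And>j. a < j \<Longrightarrow> r j = 0) \<Longrightarrow> cdf_nat r a = 1"
  using cdf_nat_eq_of_gap[of a "max a L"] cdf_nat_eq_1[of "max a L"] by auto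

lemma finite_cdf_nodes: "finite (cdf_nodes r)"
proof (rule finite_subset)
  show "cdf_nodes r \<subseteq> {..L}"
    using vanishes_above by (auto simp: mem_cdf_nodes) (metis less_irrefl not_le)
qed simp

lemma Fcdf_interpolate:
  assumes a: "a \<in> cdf_nodes r" and b: "b \<in> cdf_nodes r"
    and y: "real a \<le> y" "y < real b"
    and gap: "\<And>j. a < j \<Longrightarrow> j < b \<Longrightarrow> r j = 0"
  shows "Fcdf r y = cdf_nat r a + (y - real a) / (real b - real a) * (cdf_nat r b - cdf_nat r a)"
proof -
  have "Max {n \<in> cdf_nodes r. real n \<le> y} = a"
  proof (rule Max_eqI)
    fix n assume "n \<in> {n \<in> cdf_nodes r. real n \<le> y}"
    then show "n \<le> a" using y gap[of n] by (force simp: mem_cdf_nodes)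
  qed (use a y finite_cdf_nodes in auto)
  moreover have "(LEAST b. b \<in> cdf_nodes r \<and> real b > y) = b"
  proof (rule Least_equality)
    fix m assume "m \<in> cdf_nodes r \<and> real m > y"
    then show "b \<le> m" using y gap[of m] by (force simp: mem_cdf_nodes)
  qed (use b y in auto)
  ultimately show ?thesis using b y unfolding Fcdf_def Let_def by auto
qed

lemma cdf_nat_next_node:
  assumes "a < b" "\<And>j. a < j \<Longrightarrow> j < b \<Longrightarrow> r j = 0"
  shows "cdf_nat r b = cdf_nat r a + r b"
proof -
  obtain c where c: "b = Suc c" using assms(1) by (cases b) auto
  then have "cdf_nat r c = cdf_nat r a" using assms by (intro cdf_nat_eq_of_gap) auto
  then show ?thesis using c cdf_nat_Suc by simp
qed

lemma Fcdf_cases: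
  assumes "y \<ge> 0"
  obtains (beyond_support) a where "real a \<le> y" "\<And>j. a < j \<Longrightarrow> r j = 0" "Fcdf r y = cdf_nat r a"
  | (between_nodes) a b where "a \<in> cdf_nodes r" "b \<in> cdf_nodes r" "real a \<le> y" "y < real b"
      "\<And>j. a < j \<Longrightarrow> j < b \<Longrightarrow> r j = 0"
      "Fcdf r y = cdf_nat r a + (y - real a) / (real b - real a) * (cdf_nat r b - cdf_nat r a)"
proof -
  define S where "S = {n \<in> cdf_nodes r. real n \<le> y}"
  define a where "a = Max S"
  have "finite S" unfolding S_def using finite_cdf_nodes by simp
  moreover have "0 \<in> S" unfolding S_def using assms by (simp add: mem_cdf_nodes)
  ultimately have "a \<in> S" and a_max: "\<And>n. n \<in> S \<Longrightarrow> n \<le> a"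
    unfolding a_def by (auto intro: Max_in Max_ge)
  then have a: "a \<in> cdf_nodes r" "real a \<le> y" unfolding S_def by auto
  show ?thesis
  proof (cases "\<exists>b \<in> cdf_nodes r. real b > y")
    case True
    define b where "b = (LEAST b. b \<in> cdf_nodes r \<and> real b > y)"
    have b: "b \<in> cdf_nodes r \<and> y < real b"
      unfolding b_def using True by (metis (mono_tags, lifting) LeastI)
    have "r j = 0" if "a < j" "j < b" for j
    proof (rule ccontr)
      assume "r j \<noteq> 0"
      then have "j \<in> cdf_nodes r" using nonneg[of j] by (simp add: mem_cdf_nodes)
      then show False
        using that a_max[of j] Least_le[of "\<lambda>b. b \<in> cdf_nodes r \<and> real b > y" j]
        unfolding S_def b_def by force
    qed
    then show ?thesis using a b by (intro between_nodes[of a b] Fcdf_interpolate) auto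
  next
    case False
    have "r j = 0" if "a < j" for j
      using that a_max[of j] False nonneg[of j] unfolding S_def
      by (force simp: mem_cdf_nodes not_less)
    moreover have "Fcdf r y = cdf_nat r a"
      unfolding Fcdf_def Let_def a_def S_def using False by simp
    ultimately show ?thesis using a by (intro beyond_support)
  qed
qed

lemma Fcdf_0: "Fcdf r 0 = r 0"
  by (cases "0::real" rule: Fcdf_cases) (simp_all add: cdf_nat_def)

lemma cdf_nat_le_Fcdf:
  assumes "y \<ge> 0" "real m \<le> y"
  shows "cdf_nat r m \<le> Fcdf r y"
  using assms(1)
proof (cases rule: Fcdf_cases)
  case (beyond_support a)
  then show ?thesis using cdf_nat_eq_1_of_vanishing cdf_nat_le_1 by simp
next
  case (between_nodes a b)
  then have "cdf_nat r m \<le> cdf_nat r a"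
    using assms cdf_nat_mono[of m a] cdf_nat_eq_of_gap[of a m] by (cases "m \<le> a") auto
  moreover have "cdf_nat r a \<le> cdf_nat r b" using between_nodes by (intro cdf_nat_mono) simp
  then have "0 \<le> (y - real a) / (real b - real a) * (cdf_nat r b - cdf_nat r a)"
    using between_nodes by (intro mult_nonneg_nonneg divide_nonneg_nonneg) auto
  ultimately show ?thesis using between_nodes by linarith
qed

lemma Fcdf_le_1:
  assumes "y \<ge> 0"
  shows "Fcdf r y \<le> 1"
  using assms
proof (cases rule: Fcdf_cases)
  case (between_nodes a b)
  have "(y - real a) / (real b - real a) \<le> 1" using between_nodes by simp
  moreover have "cdf_nat r a \<le> cdf_nat r b" using between_nodes by (intro cdf_nat_mono) simp
  ultimately have "Fcdf r y \<le> cdf_nat r a + 1 * (cdf_nat r b - cdf_nat r a)"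
    unfolding between_nodes by (intro add_left_mono mult_right_mono) auto
  then show ?thesis using cdf_nat_le_1[of b] by simp
qed (simp add: cdf_nat_le_1)

lemma Fcdf_strict_mono:
  assumes "0 \<le> y" "y < y'" "Fcdf r y < 1"
  shows "Fcdf r y < Fcdf r y'"
  using assms(1)
proof (cases rule: Fcdf_cases)
  case (beyond_support a)
  then show ?thesis using assms(3) cdf_nat_eq_1_of_vanishing by simp
next
  case (between_nodes a b)
  have "b \<noteq> 0" using between_nodes assms by auto
  then have rb: "r b > 0" using between_nodes by (simp add: mem_cdf_nodes)
  have "a < b" using between_nodes by linarith
  then have cdf_b: "cdf_nat r b = cdf_nat r a + r b"
    using between_nodes by (intro cdf_nat_next_node) auto
  have Fy: "Fcdf r y = cdf_nat r a + (y - real a) / (real b - real a) * r b"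
    using between_nodes cdf_b by simp
  show ?thesis
  proof (cases "y' < real b")
    case True
    then have "Fcdf r y' = cdf_nat r a + (y' - real a) / (real b - real a) * r b"
      using between_nodes assms cdf_b by (subst Fcdf_interpolate[of a b]) auto
    moreover have "(y - real a) / (real b - real a) * r b < (y' - real a) / (real b - real a) * r b"
      using assms \<open>a < b\<close> rb by (intro mult_strict_right_mono divide_strict_right_mono) auto
    ultimately show ?thesis using Fy by simp
  next
    case False
    have "(y - real a) / (real b - real a) * r b < 1 * r b"
      using between_nodes rb by (intro mult_strict_right_mono) auto
    then have "Fcdf r y < cdf_nat r b" using Fy cdf_b by simp
    also have "cdf_nat r b \<le> Fcdf r y'" using False assms by (intro cdf_nat_le_Fcdf) auto
    finally show ?thesis .
  qed
qed

lemma exists_prev_cdf_node: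
  assumes "0 < b"
  obtains a where "a \<in> cdf_nodes r" "a < b" "\<And>j. a < j \<Longrightarrow> j < b \<Longrightarrow> r j = 0"
proof -
  define S where "S = {n \<in> cdf_nodes r. n < b}"
  have "finite S" "0 \<in> S" unfolding S_def using finite_cdf_nodes assms by (auto simp: mem_cdf_nodes)
  then have "Max S \<in> S" and max: "\<And>n. n \<in> S \<Longrightarrow> n \<le> Max S" by (auto intro: Max_in Max_ge)
  moreover have "r j = 0" if "Max S < j" "j < b" for j
  proof (rule ccontr)
    assume "r j \<noteq> 0"
    then have "j \<in> S" using that nonneg[of j] by (simp add: S_def mem_cdf_nodes)
    then show False using max[of j] that by simp
  qed
  ultimately show ?thesis by (intro that[of "Max S"]) (auto simp: S_def)
qed

lemma Fcdf_attains_between_nodes: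
  assumes "a \<in> cdf_nodes r" "b \<in> cdf_nodes r" "a < b" "\<And>j. a < j \<Longrightarrow> j < b \<Longrightarrow> r j = 0"
    and "cdf_nat r a \<le> x" "x < cdf_nat r b"
  shows "\<exists>y\<ge>real a. Fcdf r y = x"
proof -
  define t where "t = (x - cdf_nat r a) / (cdf_nat r b - cdf_nat r a)"
  define y where "y = real a + t * (real b - real a)"
  have "0 \<le> t" "t < 1" using assms unfolding t_def by auto
  then have "0 \<le> t * (real b - real a)" "0 < (1 - t) * (real b - real a)"
    using assms(3) by simp_all
  then have "real a \<le> y" "y < real b" unfolding y_def by (simp_all add: algebra_simps)
  then have "Fcdf r y = cdf_nat r a + t * (cdf_nat r b - cdf_nat r a)"
    using assms by (subst Fcdf_interpolate[of a b]) (auto simp: y_def)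
  also have "\<dots> = x" using assms unfolding t_def by simp
  finally show ?thesis using \<open>real a \<le> y\<close> by blast
qed

lemma Fcdf_surj:
  assumes "r 0 \<le> x" "x < 1"
  shows "\<exists>y\<ge>0. Fcdf r y = x"
proof -
  define b where "b = (LEAST b. x < cdf_nat r b)"
  have "x < cdf_nat r L" using cdf_nat_bound assms by simp
  then have b: "x < cdf_nat r b" and b_min: "\<And>m. x < cdf_nat r m \<Longrightarrow> b \<le> m"
    unfolding b_def by (auto intro: LeastI Least_le)
  have "b \<noteq> 0"
  proof
    assume "b = 0"
    then show False using b assms by (simp add: cdf_nat_def)
  qed
  then obtain c where c: "b = Suc c" by (cases b) auto
  have "cdf_nat r c \<le> x" using b_min[of c] c by force
  then have "r b > 0" using b c cdf_nat_Suc by simp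
  then have b_node: "b \<in> cdf_nodes r" by (simp add: mem_cdf_nodes)
  obtain a where a: "a \<in> cdf_nodes r" "a < b" "\<And>j. a < j \<Longrightarrow> j < b \<Longrightarrow> r j = 0"
    using exists_prev_cdf_node \<open>b \<noteq> 0\<close> by blast
  have "cdf_nat r a \<le> x" using b_min[of a] a by force
  then obtain y where "real a \<le> y" "Fcdf r y = x"
    using Fcdf_attains_between_nodes[of a b x] a b_node b by blast
  then show ?thesis by (intro exI[of _ y]) (auto intro: order_trans[OF of_nat_0_le_iff])
qed

lemma Finv_eq_ereal:
  assumes "r 0 \<le> x" "x < 1"
  obtains y where "y \<ge> 0" "Fcdf r y = x" "Finv r x = ereal y"
proof -
  have "\<exists>!y. y \<ge> 0 \<and> Fcdf r y = x"
  proof -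
    obtain y where y: "y \<ge> 0" "Fcdf r y = x" using Fcdf_surj assms by blast
    moreover have "y' = y" if "y' \<ge> 0" "Fcdf r y' = x" for y'
      using Fcdf_strict_mono[of y' y] Fcdf_strict_mono[of y y'] that y assms
      by (cases y' y rule: linorder_cases) auto
    ultimately show ?thesis by blast
  qed
  then have "(THE y. y \<ge> 0 \<and> Fcdf r y = x) \<ge> 0 \<and> Fcdf r (THE y. y \<ge> 0 \<and> Fcdf r y = x) = x"
    by (rule theI')
  moreover have "Finv r x = ereal (THE y. y \<ge> 0 \<and> Fcdf r y = x)"
    unfolding Finv_def using assms Fcdf_0 by simp
  ultimately show ?thesis using that by blast
qed

lemma cdf_nat_tail_le_Fcdf:
  assumes "y \<ge> 0" "2 * y \<le> real m + 1"
  shows "1 - cdf_nat r m \<le> 2 * (1 - Fcdf r y)"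
  using assms(1)
proof (cases rule: Fcdf_cases)
  case (beyond_support a)
  then have "a \<le> m" using assms by linarith
  then have "cdf_nat r m = 1" using beyond_support by (intro cdf_nat_eq_1_of_vanishing) auto
  then show ?thesis using Fcdf_le_1 assms by simp
next
  case (between_nodes a b)
  define t where "t = (y - real a) / (real b - real a)"
  have "a < b" using between_nodes by linarith
  then have "0 \<le> t" "t \<le> 1" using between_nodes by (auto simp: t_def)
  have F: "Fcdf r y = cdf_nat r a + t * (cdf_nat r b - cdf_nat r a)"
    using between_nodes by (simp add: t_def)
  have ab: "cdf_nat r a \<le> cdf_nat r b" using \<open>a < b\<close> by (intro cdf_nat_mono) simp
  show ?thesis
  proof (cases "b \<le> m")
    case True
    have "Fcdf r y \<le> cdf_nat r a + 1 * (cdf_nat r b - cdf_nat r a)"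
      unfolding F using \<open>t \<le> 1\<close> ab by (intro add_left_mono mult_right_mono) auto
    also have "\<dots> \<le> cdf_nat r m" using True by (simp add: cdf_nat_mono)
    finally show ?thesis using Fcdf_le_1[OF assms(1)] by simp
  next
    case False
    then have "t \<le> 1/2" using between_nodes assms \<open>a < b\<close> by (simp add: t_def field_simps)
    have "a \<le> m" using between_nodes assms by linarith
    then have "cdf_nat r m = cdf_nat r a"
      using between_nodes False by (intro cdf_nat_eq_of_gap) auto
    moreover have "Fcdf r y \<le> cdf_nat r a + 1/2 * (cdf_nat r b - cdf_nat r a)"
      unfolding F using \<open>t \<le> 1/2\<close> ab by (intro add_left_mono mult_right_mono) auto
    ultimately show ?thesis using cdf_nat_le_1[of b] by (simp add: field_simps)
  qed
qed

lemma cdf_nat_tail_le_Finv: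
  assumes "x < 1" "2 * Finv r x \<le> ereal (real m + 1)"
  shows "1 - cdf_nat r m \<le> 2 * (1 - x)"
proof (cases "x < r 0")
  case True
  have "r 0 \<le> cdf_nat r m" using cdf_nat_mono[of 0 m] by (simp add: cdf_nat_def)
  then show ?thesis using True assms(1) by simp
next
  case False
  then obtain y where "y \<ge> 0" "Fcdf r y = x" "Finv r x = ereal y"
    using Finv_eq_ereal assms(1) by (metis not_less)
  then show ?thesis using cdf_nat_tail_le_Fcdf[of y m] assms(2) by simp
qed

end

definition empirical_prob :: "nat \<Rightarrow> (nat \<Rightarrow> 'a) \<Rightarrow> 'a set \<Rightarrow> real" where
  "empirical_prob n X A = real (card {i \<in> {..<n}. X i \<in> A}) / real n"

lemma sum_empirical:
  assumes "finite A"
  shows "(\<Sum>j\<in>A. empirical n X j) = empirical_prob n X A"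
proof -
  have "{i \<in> {..<n}. X i \<in> A} = (\<Union>j\<in>A. {i \<in> {..<n}. X i = j})" by auto
  also have "card \<dots> = (\<Sum>j\<in>A. card {i \<in> {..<n}. X i = j})"
    by (rule card_UN_disjoint) (use assms in auto)
  finally have "card {i \<in> {..<n}. X i \<in> A} = (\<Sum>j\<in>A. card {i \<in> {..<n}. X i = j})" .
  then show ?thesis
    unfolding empirical_def empirical_prob_def by (simp add: sum_divide_distrib[symmetric])
qed

lemma empirical_prob_le_1: "empirical_prob n X A \<le> 1"
proof -
  have "card {i \<in> {..<n}. X i \<in> A} \<le> card {..<n}" by (rule card_mono) auto
  then show ?thesis unfolding empirical_prob_def by (auto simp: divide_le_eq_1)
qed

lemma finite_nat_distribution_empirical:
  assumes "n > 0"
  shows "finite_nat_distribution (empirical n X) (Max (X ` {..<n}))"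
proof
  have X_le: "X i \<le> Max (X ` {..<n})" if "i < n" for i using that by simp
  show "empirical n X j = 0" if "Max (X ` {..<n}) < j" for j
  proof -
    have "{i \<in> {..<n}. X i = j} = {}" using X_le that by fastforce
    then show ?thesis by (simp add: empirical_def)
  qed
  have "{i \<in> {..<n}. X i \<in> {..Max (X ` {..<n})}} = {..<n}" using X_le by auto
  then show "cdf_nat (empirical n X) (Max (X ` {..<n})) = 1"
    unfolding cdf_nat_def using assms by (simp add: sum_empirical empirical_prob_def)
qed (simp add: empirical_def)

lemma map_pmf_mem_eq_bernoulli_pmf:
  "map_pmf (\<lambda>x. x \<in> A) p = bernoulli_pmf (measure_pmf.prob p A)"
proof (rule pmf_eqI)
  fix b :: bool
  have "(\<lambda>x. x \<in> A) -` {b} = (if b then A else - A)" by auto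
  then show "pmf (map_pmf (\<lambda>x. x \<in> A) p) b = pmf (bernoulli_pmf (measure_pmf.prob p A)) b"
    using measure_pmf.prob_compl[of A p] by (simp add: pmf_map Compl_eq_Diff_UNIV)
qed

lemma binomial_pmf_eq_map_count:
  "binomial_pmf n (measure_pmf.prob p A) =
     map_pmf (\<lambda>X. card {i \<in> {..<n}. X i \<in> A}) (Pi_pmf {..<n} d (\<lambda>_. p))"
proof -
  have "binomial_pmf n (measure_pmf.prob p A) =
      map_pmf (\<lambda>f. card {i \<in> {..<n}. f i}) (Pi_pmf {..<n} (d \<in> A) (\<lambda>_. map_pmf (\<lambda>x. x \<in> A) p))"
    unfolding map_pmf_mem_eq_bernoulli_pmf by (rule binomial_pmf_altdef') auto
  also have "Pi_pmf {..<n} (d \<in> A) (\<lambda>_. map_pmf (\<lambda>x. x \<in> A) p) =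
      map_pmf (\<lambda>X. (\<lambda>x. x \<in> A) \<circ> X) (Pi_pmf {..<n} d (\<lambda>_. p))"
    by (rule Pi_pmf_map) auto
  finally show ?thesis by (simp add: pmf.map_comp o_def)
qed

lemma prob_empirical_prob_ge:
  assumes "n > 0" "t \<ge> 0"
  shows "measure_pmf.prob (Pi_pmf {..<n} d (\<lambda>_. p))
           {X. measure_pmf.prob p A + t \<le> empirical_prob n X A} \<le> exp (-2 * real n * t\<^sup>2)"
proof -
  interpret binomial_distribution n "measure_pmf.prob p A" by unfold_locales auto
  have "{X. measure_pmf.prob p A + t \<le> empirical_prob n X A} =
      (\<lambda>X. card {i \<in> {..<n}. X i \<in> A}) -` {x. measure_pmf.prob p A + t \<le> real x / real n}"
    by (simp add: empirical_prob_def)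
  then have "measure_pmf.prob (Pi_pmf {..<n} d (\<lambda>_. p)) {X. measure_pmf.prob p A + t \<le> empirical_prob n X A}
      = measure_pmf.prob (binomial_pmf n (measure_pmf.prob p A)) {x. measure_pmf.prob p A + t \<le> real x / real n}"
    by (simp only: binomial_pmf_eq_map_count[of n p A d] measure_map_pmf)
  also have "\<dots> \<le> exp (-2 * real n * t\<^sup>2)" using prob_ge'[OF assms] by simp
  finally show ?thesis .
qed

lemma l1_dist_le_truncation:
  fixes q :: "nat \<Rightarrow> real"
  assumes q_nonneg: "\<And>j. q j \<ge> 0" and q_partial_sums: "\<And>m. (\<Sum>j<m. q j) \<le> 1"
  shows "l1_dist q p \<le> (\<Sum>j<k. \<bar>q j - pmf p j\<bar>) + (1 - (\<Sum>j<k. q j)) + (1 - measure_pmf.prob p {..<k})"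
    (is "_ \<le> ?C")
proof -
  define f where "f j = \<bar>q j - pmf p j\<bar>" for j
  have partial: "(\<Sum>j<m. f j) \<le> ?C" for m
  proof -
    define M where "M = max m k"
    have split: "{..<M} = {..<k} \<union> {k..<M}" "{..<k} \<inter> {k..<M} = {}" by (auto simp: M_def)
    have "(\<Sum>j<m. f j) \<le> (\<Sum>j<M. f j)"
      unfolding M_def f_def by (intro sum_mono2) auto
    also have "\<dots> = (\<Sum>j<k. f j) + (\<Sum>j\<in>{k..<M}. f j)"
      unfolding split(1) by (rule sum.union_disjoint) (use split(2) in auto)
    also have "(\<Sum>j\<in>{k..<M}. f j) \<le> (\<Sum>j\<in>{k..<M}. q j) + (\<Sum>j\<in>{k..<M}. pmf p j)"
      unfolding f_def sum.distrib[symmetric] using q_nonneg by (intro sum_mono) (simp add: abs_le_iff)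
    also have "(\<Sum>j\<in>{k..<M}. q j) = (\<Sum>j<M. q j) - (\<Sum>j<k. q j)"
      unfolding split(1) by (subst sum.union_disjoint) (use split(2) in auto)
    also have "(\<Sum>j\<in>{k..<M}. pmf p j) = measure_pmf.prob p {k..<M}"
      by (simp add: measure_measure_pmf_finite)
    also have "\<dots> \<le> measure_pmf.prob p (UNIV - {..<k})"
      by (intro measure_pmf.finite_measure_mono) auto
    also have "\<dots> = 1 - measure_pmf.prob p {..<k}"
      using measure_pmf.prob_compl[of "{..<k}" p] by simp
    finally show ?thesis using q_partial_sums[of M] unfolding f_def by linarith
  qed
  have "summable f" by (rule summableI_nonneg_bounded[OF _ partial]) (simp add: f_def)
  then have "suminf f \<le> ?C" using partial by (rule suminf_le_const)
  then show ?thesis unfolding l1_dist_def f_def .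
qed

lemma exists_proper_subset_sum_ge:
  fixes d :: "'a \<Rightarrow> real"
  assumes "finite I" "sum d I < (\<Sum>j\<in>I. \<bar>d j\<bar>)" "0 < t" "2 * t \<le> (\<Sum>j\<in>I. \<bar>d j\<bar>) + sum d I"
  shows "\<exists>A\<subseteq>I. A \<noteq> {} \<and> A \<noteq> I \<and> t \<le> sum d A"
proof -
  define A where "A = {j \<in> I. 0 < d j}"
  have "(\<Sum>j\<in>I. \<bar>d j\<bar>) + sum d I = (\<Sum>j\<in>I. if 0 < d j then 2 * d j else 0)"
    unfolding sum.distrib[symmetric] by (intro sum.cong) auto
  also have "\<dots> = 2 * (\<Sum>j\<in>I. if 0 < d j then d j else 0)"
    unfolding sum_distrib_left by (intro sum.cong) auto
  also have "\<dots> = 2 * sum d A"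
    unfolding A_def using assms(1) by (simp add: sum.inter_filter)
  finally have "t \<le> sum d A" using assms(4) by simp
  moreover have "A \<noteq> I"
  proof
    assume "A = I"
    then have "\<forall>j\<in>I. 0 < d j" unfolding A_def by blast
    then have "(\<Sum>j\<in>I. \<bar>d j\<bar>) = sum d I" by (intro sum.cong) auto
    then show False using assms(2) by simp
  qed
  moreover have "A \<noteq> {}" using \<open>t \<le> sum d A\<close> assms(3) by force
  moreover have "A \<subseteq> I" unfolding A_def by blast
  ultimately show ?thesis by blast
qed

definition deviation_sets :: "'a pmf \<Rightarrow> real \<Rightarrow> 'a set \<Rightarrow> 'a set set" where
  "deviation_sets p \<delta> S = (if measure_pmf.prob p S \<le> 1 - \<delta> / 2 then {S} else Pow S - {{}, S})"

lemma card_deviation_sets: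
  assumes "finite S" "card S \<ge> 2"
  shows "real (card (deviation_sets p \<delta> S)) \<le> 2 ^ card S - 2"
proof -
  have "(2::nat) ^ 2 \<le> 2 ^ card S" using assms(2) by (intro power_increasing) auto
  then have "real (2 ^ card S - 2 :: nat) = 2 ^ card S - 2" by (simp add: of_nat_diff)
  moreover have "(2::real) ^ 2 \<le> 2 ^ card S" using assms(2) by (intro power_increasing) auto
  moreover have "S \<noteq> {}" using assms by auto
  then have "card (Pow S - {{}, S}) = 2 ^ card S - 2"
    using assms(1) by (subst card_Diff_subset) (auto simp: card_Pow)
  ultimately show ?thesis unfolding deviation_sets_def by auto
qed

lemma finite_deviation_sets: "finite S \<Longrightarrow> finite (deviation_sets p \<delta> S)"
  unfolding deviation_sets_def by simp

lemma empirical_deviates_on_deviation_set: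
  fixes X :: "nat \<Rightarrow> nat" and p :: "nat pmf"
  assumes "n > 0" "\<delta> > 0" "k > 0"
    and far: "\<delta> < l1_dist (empirical n X) p"
    and light_tail: "2 * Finv (empirical n X) (1 - \<delta> / 6) \<le> ereal (real k)"
  shows "\<exists>A \<in> deviation_sets p \<delta> {..<k}. measure_pmf.prob p A + \<delta> / 6 \<le> empirical_prob n X A"
proof -
  interpret finite_nat_distribution "empirical n X" "Max (X ` {..<n})"
    using finite_nat_distribution_empirical[OF assms(1)] .
  define qS where "qS = (\<Sum>j<k. empirical n X j)"
  define pS where "pS = measure_pmf.prob p {..<k}"
  obtain m where k: "k = Suc m" using assms(3) by (cases k) auto
  have "1 - cdf_nat (empirical n X) m \<le> 2 * (1 - (1 - \<delta> / 6))"
    using light_tail assms(2) k by (intro cdf_nat_tail_le_Finv) (auto simp: add.commute)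
  then have tail: "1 - \<delta> / 3 \<le> qS"
    unfolding qS_def cdf_nat_def k lessThan_Suc_atMost by simp
  show ?thesis
  proof (cases "pS \<le> 1 - \<delta> / 2")
    case True
    then have "{..<k} \<in> deviation_sets p \<delta> {..<k}" by (simp add: deviation_sets_def pS_def)
    moreover have "empirical_prob n X {..<k} = qS" by (simp add: qS_def sum_empirical)
    ultimately show ?thesis using True tail by (intro bexI[of _ "{..<k}"]) (auto simp: pS_def)
  next
    case False
    define d where "d j = empirical n X j - pmf p j" for j
    have sum_d: "sum d A = empirical_prob n X A - measure_pmf.prob p A" if "finite A" for A
      using that by (simp add: d_def sum_subtractf sum_empirical measure_measure_pmf_finite)
    have "l1_dist (empirical n X) p \<le> (\<Sum>j<k. \<bar>d j\<bar>) + (1 - qS) + (1 - pS)"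
      unfolding d_def qS_def pS_def
      by (rule l1_dist_le_truncation) (simp add: empirical_def, simp add: sum_empirical empirical_prob_le_1)
    then have "\<delta> < (\<Sum>j<k. \<bar>d j\<bar>) + (1 - qS) + (1 - pS)" using far by linarith
    moreover have "sum d {..<k} = qS - pS"
      using sum_d[of "{..<k}"] by (simp add: qS_def pS_def sum_empirical)
    ultimately obtain A where "A \<subseteq> {..<k}" "A \<noteq> {}" "A \<noteq> {..<k}" "\<delta> / 6 \<le> sum d A"
      using exists_proper_subset_sum_ge[of "{..<k}" d "\<delta> / 6"] tail False assms(2) by auto
    then show ?thesis
      using False sum_d[of A] finite_subset[of A "{..<k}"]
      by (intro bexI[of _ A]) (auto simp: deviation_sets_def pS_def)
  qed
qed

theorem lemma4:
  fixes p :: "nat pmf" and \<delta> :: real and k :: nat and n :: nat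
  assumes "\<delta> > 0" and "k \<ge> 2"
  shows "measure_pmf.prob (Pi_pmf {..<n} 0 (\<lambda>_. p))
           {X. l1_dist (empirical n X) p > \<delta> \<and>
               2 * Finv (empirical n X) (1 - \<delta> / 6) \<le> ereal (real k)}
         \<le> (2 ^ k - 2) * exp (- (real n * \<delta>\<^sup>2 / 18))"
proof (cases "n = 0")
  case True
  have "(2::real) ^ 2 \<le> 2 ^ k" using assms(2) by (intro power_increasing) auto
  then show ?thesis using True by (intro order_trans[OF measure_pmf.prob_le_1]) simp
next
  case False
  let ?P = "Pi_pmf {..<n} 0 (\<lambda>_. p)"
  let ?bad = "{X. l1_dist (empirical n X) p > \<delta> \<and> 2 * Finv (empirical n X) (1 - \<delta> / 6) \<le> ereal (real k)}"
  let ?G = "deviation_sets p \<delta> {..<k}"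
  let ?dev = "\<lambda>A. {X. measure_pmf.prob p A + \<delta> / 6 \<le> empirical_prob n X A}"
  have "?bad \<subseteq> (\<Union>A\<in>?G. ?dev A)"
    using empirical_deviates_on_deviation_set[of n \<delta> k] False assms by fastforce
  then have "measure_pmf.prob ?P ?bad \<le> (\<Sum>A\<in>?G. measure_pmf.prob ?P (?dev A))"
    by (intro order_trans[OF measure_pmf.finite_measure_mono measure_pmf.finite_measure_subadditive_finite])
      (auto intro: finite_deviation_sets)
  also have "\<dots> \<le> (\<Sum>A\<in>?G. exp (- (real n * \<delta>\<^sup>2 / 18)))"
    using prob_empirical_prob_ge[of n "\<delta> / 6"] False assms(1)
    by (intro sum_mono) (simp add: power_divide)
  also have "\<dots> \<le> (2 ^ k - 2) * exp (- (real n * \<delta>\<^sup>2 / 18))"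
    using card_deviation_sets[of "{..<k}" p \<delta>] assms(2) by (simp add: mult_right_mono)
  finally show ?thesis .
qed

end
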